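(* Let $(X_i,T_i,\delta_i,\xi_i,\xi_i\nu_i)$, $i=1,\ldots,n$, be observations from the mixture cure model with partially known cure status (context), with distinct observed times $T_{(1)}<\cdots<T_{(n)}$ and concomitants $\delta_{[i]},\xi_{[i]},\nu_{[i]}$, and let $B_{h[i]}(x)\ge 0$ be the Nadaraya–Watson weights at a fixed covariate value $x$. Consider the local (kernel-weighted) likelihood of a subprobability distribution putting mass $P_i=P_i(x)\ge 0$ at $T_{(i)}$, $i=1,\dots,n$, with $\sum_i P_i\le 1$ and remaining mass $1-\sum_iP_i$ at $+\infty$ (the cured fraction): $$L(P_1,\ldots,P_n)=\prod_{i=1}^n P_i^{B_{h[i]}(x)\mathbf 1(\delta_{[i]}=1)}\Big(1-\sum_{j=1}^{i-1}P_j\Big)^{B_{h[i]}(x)\mathbf 1(\delta_{[i]}=0,\xi_{[i]}\nu_{[i]}=0)}\Big(1-\sum_{j=1}^{n}P_j\Big)^{B_{h[i]}(x)\mathbf 1(\delta_{[i]}=0,\xi_{[i]}\nu_{[i]}=1)}.$$ Then $L$ is maximized by a distribution whose survival function $1-\sum_{j:T_{(j)}\le t}P_j$ equals $$\widehat S_h^c(t\mid x)=1-\widehat F_h^c(t\mid x)=\prod_{i=1}^{n}\left\{1-\frac{\delta_{[i]}B_{h[i]}(x)\mathbf 1(T_{(i)}\le t)}{\sum_{j=i}^{n}B_{h[j]}(x)+\sum_{j=1}^{i-1}B_{h[j]}(x)\mathbf 1(\xi_{[j]}\nu_{[j]}=1)}\right\},$$ i.e. $1-\widehat F_h^c(t\mid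 x)$ is the nonparametric local maximum likelihood estimator of $1-F(t\mid x)$.
   Context: Mixture cure model: $Y\in(0,\infty]$ survival time ($Y=\infty$ iff cured), $\nu=\mathbf 1(Y=\infty)$, censoring time $C$ conditionally independent of $(Y,\nu)$ given the covariate $X$; observed $T=\min(Y,C)$, $\delta=\mathbf 1(Y\le C)$, $\xi$ indicates whether the cure status is known, and $\xi\nu$ is observed. $F(t\mid x)=P(Y\le t\mid X=x)$. Nadaraya–Watson weights: $B_{hi}(x)=K_h(x-X_i)/\sum_{j}K_h(x-X_j)$ with $K_h(u)=K(u/h)/h$ for a kernel $K$ and bandwidth $h$; $B_{h[i]}(x)$ is the weight of the observation with time $T_{(i)}$. Denominators in the product are assumed nonzero. *)

theory Defs
  imports Complex_Main
begin

text \<open>Observations are indexed 1..n in the order of the (distinct) observed times,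
  so T i = T_(i), X i, delta i, xi i, nu i are the concomitants X_[i], delta_[i], ... .\<close>

definition Kh :: "(real \<Rightarrow> real) \<Rightarrow> real \<Rightarrow> real \<Rightarrow> real" where
  "Kh K h u = K (u / h) / h"

definition nw_weight :: "(real \<Rightarrow> real) \<Rightarrow> real \<Rightarrow> (nat \<Rightarrow> real) \<Rightarrow> nat \<Rightarrow> real \<Rightarrow> nat \<Rightarrow> real" where
  "nw_weight K h X n x i = Kh K h (x - X i) / (\<Sum>j=1..n. Kh K h (x - X j))"

text \<open>Power with the convention a^0 = 1 (also for a = 0), as in the likelihood.\<close>
definition rpow :: "real \<Rightarrow> real \<Rightarrow> real" where
  "rpow a b = (if b = 0 then 1 else a powr b)"

text \<open>Subprobability masses P_1..P_n on T_(1)..T_(n); remaining mass at infinity.\<close>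
definition subprob :: "nat \<Rightarrow> (nat \<Rightarrow> real) \<Rightarrow> bool" where
  "subprob n P \<longleftrightarrow> (\<forall>i\<in>{1..n}. 0 \<le> P i) \<and> (\<Sum>i=1..n. P i) \<le> 1"

text \<open>Local (kernel-weighted) likelihood; xinu i stands for xi_[i] nu_[i] = 1.\<close>
definition loc_lik :: "nat \<Rightarrow> (nat \<Rightarrow> real) \<Rightarrow> (nat \<Rightarrow> bool) \<Rightarrow> (nat \<Rightarrow> bool) \<Rightarrow> (nat \<Rightarrow> real) \<Rightarrow> real" where
  "loc_lik n B delta xinu P =
     (\<Prod>i=1..n.
        rpow (P i) (B i * of_bool (delta i))
      * rpow (1 - (\<Sum>j=1..<i. P j)) (B i * of_bool (\<not> delta i \<and> \<not> xinu i))
      * rpow (1 - (\<Sum>j=1..n. P j)) (B i * of_bool (\<not> delta i \<and> xinu i)))"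

definition S_hat :: "nat \<Rightarrow> (nat \<Rightarrow> real) \<Rightarrow> (nat \<Rightarrow> real) \<Rightarrow> (nat \<Rightarrow> bool) \<Rightarrow> (nat \<Rightarrow> bool) \<Rightarrow> real \<Rightarrow> real" where
  "S_hat n B T delta xinu t =
     (\<Prod>i=1..n. 1 - (of_bool (delta i) * B i * of_bool (T i \<le> t)) /
        ((\<Sum>j=i..n. B j) + (\<Sum>j=1..<i. B j * of_bool (xinu j))))"

end

theory Submission
  imports Defs "HOL-Analysis.Convex"
begin

text \<open>The likelihood is maximised stage by stage. If mass r is still unassigned before
  T_(m), the factors from index m on depend on Q_m through Q_m^a_m and on the later masses only
  through the remaining mass r - Q_m, so by backward induction the optimal value is
  r^E_m C_m, with E_m the total exponent from m on. The induction step is the weighted AM-GM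
  inequality x^a y^b \<le> (a/(a+b))^a (b/(a+b))^b (x+y)^(a+b), with equality iff x : y = a : b;
  hence the optimum puts the fraction a_m / (a_m + E_(m+1)) of the remaining mass at T_(m).
  The survival function of the maximiser is the product of the complementary fractions, and
  a_j + E_(j+1) is the kernel weight at risk at T_(j) plus that of the observations known to be
  cured before it, which is the denominator of the estimator.\<close>

lemma rpow_nonneg: "0 \<le> rpow x e"
  by (simp add: rpow_def)

lemma rpow_zero_exponent [simp]: "rpow x 0 = 1"
  by (simp add: rpow_def)

lemma rpow_one_base [simp]: "rpow 1 e = 1"
  by (simp add: rpow_def)

lemma rpow_add: "0 \<le> a \<Longrightarrow> 0 \<le> b \<Longrightarrow> rpow x (a + b) = rpow x a * rpow x b"
  by (simp add: rpow_def powr_add)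

lemma rpow_mult: "0 \<le> x \<Longrightarrow> 0 \<le> y \<Longrightarrow> rpow (x * y) e = rpow x e * rpow y e"
  by (simp add: rpow_def powr_mult)

lemma rpow_mono: "0 \<le> x \<Longrightarrow> x \<le> y \<Longrightarrow> 0 \<le> e \<Longrightarrow> rpow x e \<le> rpow y e"
  by (simp add: rpow_def powr_mono2)

lemma prod_rpow_eq_rpow_sum:
  assumes "finite A" "\<And>i. i \<in> A \<Longrightarrow> 0 \<le> e i"
  shows "(\<Prod>i\<in>A. rpow x (e i)) = rpow x (\<Sum>i\<in>A. e i)"
  using assms by (induction A rule: finite_induct) (simp_all add: rpow_add sum_nonneg)

definition amgm_const :: "real \<Rightarrow> real \<Rightarrow> real" where
  "amgm_const a b = rpow (a / (a + b)) a * rpow (b / (a + b)) b"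

lemma amgm_const_nonneg: "0 \<le> amgm_const a b"
  by (simp add: amgm_const_def rpow_nonneg)

lemma powr_weighted_amgm:
  fixes x y a b :: real
  assumes "0 < x" "0 < y" "0 < a" "0 < b"
  shows "x powr a * y powr b \<le> (a/(a+b)) powr a * (b/(a+b)) powr b * (x+y) powr (a+b)"
proof -
  define p where "p = a/(a+b)"
  define q where "q = b/(a+b)"
  have p: "0 < p" and q: "0 < q" and pq: "p + q = 1"
    using assms by (auto simp: p_def q_def add_divide_distrib[symmetric])
  have "(x/p) powr p * (y/q) powr q \<le> p*(x/p) + q*(y/q)"
    by (rule Youngs_inequality_0) (use p q pq assms in auto)
  also have "\<dots> = x + y" using p q by simp
  finally have "((x/p) powr p * (y/q) powr q) powr (a+b) \<le> (x+y) powr (a+b)"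
    using assms by (intro powr_mono2) auto
  moreover have "((x/p) powr p * (y/q) powr q) powr (a+b) = x powr a / p powr a * (y powr b / q powr b)"
    using assms p q by (simp add: powr_mult powr_powr powr_divide p_def q_def)
  ultimately show ?thesis
    using p q by (simp add: p_def[symmetric] q_def[symmetric] field_simps)
qed

lemma rpow_weighted_amgm:
  fixes x y a b :: real
  assumes "0 \<le> x" "0 \<le> y" "0 \<le> a" "0 \<le> b"
  shows "rpow x a * rpow y b \<le> amgm_const a b * rpow (x+y) (a+b)"
proof (cases "a = 0 \<or> b = 0")
  case True
  then show ?thesis
    using assms by (auto simp: amgm_const_def intro!: rpow_mono)
next
  case False
  then have "0 < a" "0 < b" using assms by auto
  show ?thesis
  proof (cases "x = 0 \<or> y = 0")
    case True
    then show ?thesis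
      using \<open>0 < a\<close> \<open>0 < b\<close> by (auto simp: rpow_def amgm_const_nonneg)
  next
    case False
    then have "0 < x" "0 < y" using assms by auto
    from powr_weighted_amgm[OF this \<open>0 < a\<close> \<open>0 < b\<close>] show ?thesis
      using \<open>0 < a\<close> \<open>0 < b\<close> by (simp add: amgm_const_def rpow_def)
  qed
qed

lemma rpow_weighted_amgm_eq:
  fixes r a b :: real
  assumes "0 \<le> r" "0 \<le> a" "0 \<le> b"
  shows "rpow (r * (a/(a+b))) a * rpow (r * (1 - a/(a+b))) b = amgm_const a b * rpow r (a+b)"
proof (cases "a + b = 0")
  case True
  then have "a = 0" "b = 0" using assms by auto
  then show ?thesis by (simp add: amgm_const_def)
next
  case False
  then have "1 - a/(a+b) = b/(a+b)" by (simp add: field_simps)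
  then show ?thesis
    using assms by (simp only: rpow_mult rpow_add amgm_const_def divide_nonneg_nonneg
        add_nonneg_nonneg mult_ac)
qed

locale sequential_likelihood =
  fixes n :: nat and a c :: "nat \<Rightarrow> real" and W :: real
  assumes a_nonneg: "0 \<le> a j" and c_nonneg: "0 \<le> c j" and W_nonneg: "0 \<le> W"
begin

text \<open>a j and c j are the exponents of the mass at T_(j) and of the mass not yet assigned
  before T_(j); W is the exponent of the mass left at infinity. tail_lik m r Q is the part of the
  likelihood from index m on when mass r is still unassigned before T_(m).\<close>

definition tail_lik :: "nat \<Rightarrow> real \<Rightarrow> (nat \<Rightarrow> real) \<Rightarrow> real" where
  "tail_lik m r Q = (\<Prod>j=m..n. rpow (Q j) (a j) * rpow (r - (\<Sum>i=m..<j. Q i)) (c j))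
      * rpow (r - (\<Sum>i=m..n. Q i)) W"

definition tail_exponent :: "nat \<Rightarrow> real" where
  "tail_exponent m = (\<Sum>j=m..n. a j + c j) + W"

definition tail_const :: "nat \<Rightarrow> real" where
  "tail_const m = (\<Prod>j=m..n. amgm_const (a j) (tail_exponent (Suc j)))"

definition tail_max :: "nat \<Rightarrow> real \<Rightarrow> real" where
  "tail_max m r = rpow r (tail_exponent m) * tail_const m"

definition hazard :: "nat \<Rightarrow> real" where
  "hazard j = a j / (a j + tail_exponent (Suc j))"

definition optimal_mass :: "nat \<Rightarrow> real \<Rightarrow> nat \<Rightarrow> real" where
  "optimal_mass m r j = r * (\<Prod>i=m..<j. 1 - hazard i) * hazard j"

lemma tail_exponent_nonneg: "0 \<le> tail_exponent m"
  unfolding tail_exponent_def using a_nonneg c_nonneg W_nonneg by (simp add: sum_nonneg)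

lemma tail_exponent_Suc_n: "tail_exponent (Suc n) = W"
  by (simp add: tail_exponent_def)

lemma tail_exponent_step: "m \<le> n \<Longrightarrow> tail_exponent m = a m + c m + tail_exponent (Suc m)"
  by (simp add: tail_exponent_def sum.atLeast_Suc_atMost)

lemma tail_const_nonneg: "0 \<le> tail_const m"
  unfolding tail_const_def by (simp add: prod_nonneg amgm_const_nonneg)

lemma tail_const_Suc_n: "tail_const (Suc n) = 1"
  by (simp add: tail_const_def)

lemma tail_const_step:
  "m \<le> n \<Longrightarrow> tail_const m = amgm_const (a m) (tail_exponent (Suc m)) * tail_const (Suc m)"
  by (simp add: tail_const_def prod.atLeast_Suc_atMost)

lemma tail_max_Suc_n: "tail_max (Suc n) r = rpow r W"
  by (simp add: tail_max_def tail_exponent_Suc_n tail_const_Suc_n)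

lemma tail_max_step:
  assumes "m \<le> n"
  shows "tail_max m r = rpow r (c m) * tail_const (Suc m)
      * (amgm_const (a m) (tail_exponent (Suc m)) * rpow r (a m + tail_exponent (Suc m)))"
  using assms a_nonneg c_nonneg tail_exponent_nonneg
  by (simp add: tail_max_def tail_exponent_step tail_const_step rpow_add algebra_simps)

lemma hazard_nonneg: "0 \<le> hazard j"
  unfolding hazard_def using a_nonneg tail_exponent_nonneg by simp

lemma hazard_le_1: "hazard j \<le> 1"
  unfolding hazard_def using a_nonneg[of j] tail_exponent_nonneg[of "Suc j"]
  by (cases "a j + tail_exponent (Suc j) = 0") (auto simp: divide_le_eq_1)

lemma tail_lik_Suc_n: "tail_lik (Suc n) r Q = rpow r W"
  by (simp add: tail_lik_def)

lemma tail_lik_step: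
  assumes "m \<le> n"
  shows "tail_lik m r Q = rpow (Q m) (a m) * rpow r (c m) * tail_lik (Suc m) (r - Q m) Q"
proof -
  have "(\<Prod>j=m..n. rpow (Q j) (a j) * rpow (r - (\<Sum>i=m..<j. Q i)) (c j))
     = rpow (Q m) (a m) * rpow r (c m) *
       (\<Prod>j=Suc m..n. rpow (Q j) (a j) * rpow (r - Q m - (\<Sum>i=Suc m..<j. Q i)) (c j))"
  proof -
    have "(\<Prod>j=Suc m..n. rpow (Q j) (a j) * rpow (r - (\<Sum>i=m..<j. Q i)) (c j))
        = (\<Prod>j=Suc m..n. rpow (Q j) (a j) * rpow (r - Q m - (\<Sum>i=Suc m..<j. Q i)) (c j))"
      by (intro prod.cong) (auto simp: sum.atLeast_Suc_lessThan algebra_simps)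
    then show ?thesis using assms by (simp add: prod.atLeast_Suc_atMost)
  qed
  moreover have "r - (\<Sum>i=m..n. Q i) = r - Q m - (\<Sum>i=Suc m..n. Q i)"
    using assms by (simp add: sum.atLeast_Suc_atMost)
  ultimately show ?thesis
    unfolding tail_lik_def by (simp only: mult_ac)
qed

lemma tail_lik_cong:
  assumes "\<And>j. j \<in> {m..n} \<Longrightarrow> Q j = Q' j"
  shows "tail_lik m r Q = tail_lik m r Q'"
  unfolding tail_lik_def using assms by (auto intro!: prod.cong sum.cong arg_cong2[where f = rpow])

lemma tail_lik_le_tail_max:
  assumes "m \<le> Suc n" "0 \<le> r" "\<And>j. j \<in> {m..n} \<Longrightarrow> 0 \<le> Q j" "(\<Sum>j=m..n. Q j) \<le> r"
  shows "tail_lik m r Q \<le> tail_max m r"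
  using assms
proof (induction m arbitrary: r rule: inc_induct)
  case base
  then show ?case by (simp add: tail_lik_Suc_n tail_max_Suc_n)
next
  case (step m)
  let ?E = "tail_exponent (Suc m)"
  have mn: "m \<le> n" using step by simp
  have Qm: "0 \<le> Q m" using step.prems mn by auto
  have sum_split: "(\<Sum>j=m..n. Q j) = Q m + (\<Sum>j=Suc m..n. Q j)"
    using mn by (simp add: sum.atLeast_Suc_atMost)
  moreover have "0 \<le> (\<Sum>j=Suc m..n. Q j)" using step.prems by (auto intro!: sum_nonneg)
  ultimately have rest: "0 \<le> r - Q m" using step.prems by linarith
  have "tail_lik m r Q = rpow (Q m) (a m) * rpow r (c m) * tail_lik (Suc m) (r - Q m) Q"
    by (rule tail_lik_step[OF mn])
  also have "\<dots> \<le> rpow (Q m) (a m) * rpow r (c m) * tail_max (Suc m) (r - Q m)"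
    using step.IH[OF rest] step.prems sum_split by (intro mult_left_mono) (auto simp: rpow_nonneg)
  also have "\<dots> = rpow r (c m) * tail_const (Suc m) * (rpow (Q m) (a m) * rpow (r - Q m) ?E)"
    by (simp add: tail_max_def algebra_simps)
  also have "\<dots> \<le> rpow r (c m) * tail_const (Suc m) * (amgm_const (a m) ?E * rpow r (a m + ?E))"
    using rpow_weighted_amgm[OF Qm rest a_nonneg tail_exponent_nonneg]
    by (intro mult_left_mono) (simp_all add: rpow_nonneg tail_const_nonneg)
  also have "\<dots> = tail_max m r"
    by (rule tail_max_step[OF mn, symmetric])
  finally show ?case .
qed

lemma tail_lik_optimal_mass:
  assumes "m \<le> Suc n" "0 \<le> r"
  shows "tail_lik m r (optimal_mass m r) = tail_max m r"
  using assms
proof (induction m arbitrary: r rule: inc_induct)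
  case base
  then show ?case by (simp add: tail_lik_Suc_n tail_max_Suc_n)
next
  case (step m)
  let ?E = "tail_exponent (Suc m)" and ?l = "hazard m"
  have mn: "m \<le> n" using step by simp
  have rest: "0 \<le> r * (1 - ?l)" using step.prems hazard_le_1 by simp
  have "optimal_mass m r j = optimal_mass (Suc m) (r * (1 - ?l)) j" if "j \<in> {Suc m..n}" for j
    using that by (simp add: optimal_mass_def prod.atLeast_Suc_lessThan)
  moreover have "r - r * ?l = r * (1 - ?l)"
    by (simp add: algebra_simps)
  ultimately have shift: "tail_lik (Suc m) (r - r * ?l) (optimal_mass m r)
      = tail_lik (Suc m) (r * (1 - ?l)) (optimal_mass (Suc m) (r * (1 - ?l)))"
    by (metis tail_lik_cong)
  have "tail_lik m r (optimal_mass m r) = rpow (r * ?l) (a m) * rpow r (c m) * tail_max (Suc m) (r * (1 - ?l))"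
    using tail_lik_step[OF mn] shift step.IH[OF rest] by (simp add: optimal_mass_def)
  also have "\<dots> = rpow r (c m) * tail_const (Suc m) * (rpow (r * ?l) (a m) * rpow (r * (1 - ?l)) ?E)"
    by (simp add: tail_max_def algebra_simps)
  also have "\<dots> = rpow r (c m) * tail_const (Suc m) * (amgm_const (a m) ?E * rpow r (a m + ?E))"
    using rpow_weighted_amgm_eq[OF step.prems a_nonneg tail_exponent_nonneg] by (simp add: hazard_def)
  also have "\<dots> = tail_max m r"
    by (rule tail_max_step[OF mn, symmetric])
  finally show ?case .
qed

lemma optimal_mass_nonneg: "0 \<le> r \<Longrightarrow> 0 \<le> optimal_mass m r j"
  unfolding optimal_mass_def using hazard_nonneg hazard_le_1
  by (intro mult_nonneg_nonneg prod_nonneg) auto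

lemma remaining_optimal_mass:
  "r - (\<Sum>j=m..k. optimal_mass m r j) = r * (\<Prod>j=m..k. 1 - hazard j)"
proof (induction k)
  case (Suc k)
  show ?case
  proof (cases "m \<le> Suc k")
    case True
    then have "optimal_mass m r (Suc k) = r * (\<Prod>j=m..k. 1 - hazard j) * hazard (Suc k)"
      by (simp add: optimal_mass_def atLeastLessThanSuc_atLeastAtMost)
    with True Suc.IH show ?thesis by (simp add: algebra_simps)
  qed simp
qed (cases m; simp add: optimal_mass_def algebra_simps)

lemma subprob_optimal_mass: "subprob n (optimal_mass 1 1)"
proof -
  have "1 - (\<Sum>j=1..n. optimal_mass 1 1 j) = (\<Prod>j=1..n. 1 - hazard j)"
    using remaining_optimal_mass[of 1 1 n] by simp
  also have "\<dots> \<ge> 0" using hazard_le_1 by (intro prod_nonneg) auto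
  finally show ?thesis
    unfolding subprob_def using optimal_mass_nonneg by auto
qed

lemma tail_lik_le_optimal_mass:
  assumes "subprob n Q"
  shows "tail_lik 1 1 Q \<le> tail_lik 1 1 (optimal_mass 1 1)"
  using tail_lik_le_tail_max[of 1 1 Q] tail_lik_optimal_mass[of 1 1] assms
  by (simp add: subprob_def)

end


lemma strict_mono_on_sublevel_initial_segment:
  fixes T :: "nat \<Rightarrow> 'a::linorder"
  assumes "strict_mono_on {1..n} T"
  obtains k where "k \<le> n" "{j\<in>{1..n}. T j \<le> t} = {1..k}"
proof (cases "{j\<in>{1..n}. T j \<le> t} = {}")
  case True
  then show ?thesis by (intro that[of 0]) auto
next
  case False
  define k where "k = Max {j\<in>{1..n}. T j \<le> t}"
  have k: "k \<in> {1..n}" "T k \<le> t"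
    using Max_in[OF _ False] by (auto simp: k_def)
  have "{j\<in>{1..n}. T j \<le> t} = {1..k}"
  proof (intro equalityI subsetI)
    fix j assume "j \<in> {j\<in>{1..n}. T j \<le> t}"
    then show "j \<in> {1..k}" using Max_ge[of _ j] by (auto simp: k_def)
  next
    fix j assume "j \<in> {1..k}"
    then show "j \<in> {j\<in>{1..n}. T j \<le> t}"
      using k strict_mono_on_leD[OF assms, of j k] by auto
  qed
  with k show ?thesis by (intro that[of k]) auto
qed

locale cure_sample =
  fixes n :: nat and B :: "nat \<Rightarrow> real" and delta cured :: "nat \<Rightarrow> bool"
  assumes weight_nonneg: "i \<in> {1..n} \<Longrightarrow> 0 \<le> B i"
    and cured_not_event: "i \<in> {1..n} \<Longrightarrow> cured i \<Longrightarrow> \<not> delta i"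
begin

definition event_exponent :: "nat \<Rightarrow> real" where
  "event_exponent i = (if i \<in> {1..n} then B i * of_bool (delta i) else 0)"

definition censoring_exponent :: "nat \<Rightarrow> real" where
  "censoring_exponent i = (if i \<in> {1..n} then B i * of_bool (\<not> delta i \<and> \<not> cured i) else 0)"

definition cure_exponent :: real where
  "cure_exponent = (\<Sum>i=1..n. B i * of_bool (\<not> delta i \<and> cured i))"

sublocale sequential_likelihood n event_exponent censoring_exponent cure_exponent
  by unfold_locales
    (auto simp: event_exponent_def censoring_exponent_def cure_exponent_def weight_nonneg
      intro!: sum_nonneg)

lemma loc_lik_eq_tail_lik: "loc_lik n B delta cured Q = tail_lik 1 1 Q"
proof -
  have "loc_lik n B delta cured Q =
      (\<Prod>i=1..n. rpow (Q i) (event_exponent i) * rpow (1 - (\<Sum>j=1..<i. Q j)) (censoring_exponent i))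
      * (\<Prod>i=1..n. rpow (1 - (\<Sum>j=1..n. Q j)) (B i * of_bool (\<not> delta i \<and> cured i)))"
    unfolding loc_lik_def prod.distrib[symmetric]
    by (intro prod.cong) (auto simp: event_exponent_def censoring_exponent_def)
  also have "(\<Prod>i=1..n. rpow (1 - (\<Sum>j=1..n. Q j)) (B i * of_bool (\<not> delta i \<and> cured i)))
      = rpow (1 - (\<Sum>j=1..n. Q j)) cure_exponent"
    unfolding cure_exponent_def using weight_nonneg by (intro prod_rpow_eq_rpow_sum) auto
  finally show ?thesis by (simp add: tail_lik_def)
qed

lemma hazard_eq:
  assumes "i \<in> {1..n}"
  shows "hazard i = of_bool (delta i) * B i / ((\<Sum>j=i..n. B j) + (\<Sum>j=1..<i. B j * of_bool (cured j)))"
proof (cases "delta i")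
  case True
  define k where "k j = B j * of_bool (\<not> delta j \<and> cured j)" for j
  have "cure_exponent = (\<Sum>j=1..<i. k j) + (k i + (\<Sum>j=Suc i..n. k j))"
    unfolding cure_exponent_def k_def[symmetric]
    using assms sum.atLeastLessThan_concat[of 1 i "Suc n" k]
    by (simp add: atLeastLessThanSuc_atLeastAtMost sum.atLeast_Suc_atMost)
  moreover have "k i = 0" using True by (simp add: k_def)
  moreover have "(\<Sum>j=1..<i. k j) = (\<Sum>j=1..<i. B j * of_bool (cured j))"
    using assms cured_not_event by (intro sum.cong) (auto simp: k_def)
  moreover have "(\<Sum>j=Suc i..n. event_exponent j + censoring_exponent j) + (\<Sum>j=Suc i..n. k j)
      = (\<Sum>j=Suc i..n. B j)"
    unfolding sum.distrib[symmetric] using assms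
    by (intro sum.cong) (auto simp: event_exponent_def censoring_exponent_def k_def)
  moreover have "(\<Sum>j=i..n. B j) = B i + (\<Sum>j=Suc i..n. B j)"
    using assms by (simp add: sum.atLeast_Suc_atMost)
  moreover have "event_exponent i = B i" using assms True by (simp add: event_exponent_def)
  ultimately have "event_exponent i + tail_exponent (Suc i)
      = (\<Sum>j=i..n. B j) + (\<Sum>j=1..<i. B j * of_bool (cured j))"
    unfolding tail_exponent_def by linarith
  then show ?thesis
    using assms True by (simp add: hazard_def event_exponent_def)
next
  case False
  then show ?thesis by (simp add: hazard_def event_exponent_def)
qed

lemma S_hat_eq_prod_hazard:
  "S_hat n B T delta cured t = (\<Prod>i\<in>{j\<in>{1..n}. T j \<le> t}. 1 - hazard i)"
proof -
  have "S_hat n B T delta cured t = (\<Prod>i=1..n. if T i \<le> t then 1 - hazard i else 1)"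
    unfolding S_hat_def by (intro prod.cong) (auto simp: hazard_eq)
  also have "\<dots> = (\<Prod>i\<in>{j\<in>{1..n}. T j \<le> t}. 1 - hazard i)"
    by (rule prod.inter_filter[symmetric]) simp
  finally show ?thesis .
qed

lemma survival_optimal_mass_eq_S_hat:
  assumes "strict_mono_on {1..n} T"
  shows "1 - (\<Sum>j\<in>{j\<in>{1..n}. T j \<le> t}. optimal_mass 1 1 j) = S_hat n B T delta cured t"
proof -
  obtain k where "{j\<in>{1..n}. T j \<le> t} = {1..k}"
    using strict_mono_on_sublevel_initial_segment[OF assms] .
  then show ?thesis
    using remaining_optimal_mass[of 1 1 k] by (simp add: S_hat_eq_prod_hazard)
qed

end

theorem proposition2:
  fixes n :: nat and K :: "real \<Rightarrow> real" and h x :: real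
    and X T :: "nat \<Rightarrow> real" and delta xi nu :: "nat \<Rightarrow> bool"
  assumes "h > 0"
    and "strict_mono_on {1..n} T"
    and "\<forall>i\<in>{1..n}. 0 \<le> nw_weight K h X n x i"
    and "\<forall>i\<in>{1..n}. nu i \<longrightarrow> \<not> delta i"
    and "\<forall>i\<in>{1..n}. (\<Sum>j=i..n. nw_weight K h X n x j)
            + (\<Sum>j=1..<i. nw_weight K h X n x j * of_bool (xi j \<and> nu j)) \<noteq> 0"
  shows "\<exists>P. subprob n P
     \<and> (\<forall>Q. subprob n Q \<longrightarrow>
          loc_lik n (nw_weight K h X n x) delta (\<lambda>i. xi i \<and> nu i) Q
          \<le> loc_lik n (nw_weight K h X n x) delta (\<lambda>i. xi i \<and> nu i) P)
     \<and> (\<forall>t::real. 1 - (\<Sum>j\<in>{j\<in>{1..n}. T j \<le> t}. P j)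
          = S_hat n (nw_weight K h X n x) T delta (\<lambda>i. xi i \<and> nu i) t)"
proof -
  interpret cure_sample n "nw_weight K h X n x" delta "\<lambda>i. xi i \<and> nu i"
    using assms(3,4) by unfold_locales auto
  show ?thesis
    using subprob_optimal_mass tail_lik_le_optimal_mass survival_optimal_mass_eq_S_hat[OF assms(2)]
    by (intro exI[of _ "optimal_mass 1 1"]) (simp add: loc_lik_eq_tail_lik)
qed

end
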